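(* Let $T$ be a lifted graph, $F\colon T\to T$ a continuous sun-like map of degree 1, ${\cal P}$ a basic partition of $F$ and ${\cal G}$ its covering graph. If $\alpha\to\beta$ is an arrow in ${\cal G}$ and $A\in{\cal P}$ satisfies $\langle\alpha\rangle\subset A$, then $\langle\alpha\rangle$ positively $F$-covers $\langle\beta\rangle+p(A)$.
   Context: A lifted graph is a connected topological space $T$ with a homeomorphism $h\colon\mathbb R\to h(\mathbb R)\subset T$ and a homeomorphism $\tau\colon T\to T$ such that $\tau(h(x))=h(x+1)$, the closure of each connected component of $T\setminus h(\mathbb R)$ is a topological finite graph meeting $h(\mathbb R)$ in exactly one point, and only finitely many such components have closure meeting $h([0,1])$. Identify $h(\mathbb R)$ with $\mathbb R$, write $x+m:=\tau^m(x)$; $r_{\mathbb R}\colon T\to\mathbb R$ is the identity on $\mathbb R$ and maps a component $C$ of $T\setminus\mathbb R$ to the point $\overline C\cap\mathbb R$. $F$ has degree 1 if $F(x+1)=F(x)+1$. Let $T_{\mathbb R}:=\overline{\bigcup_{n\ge0}F^n(\mathbb R)}$, $X:=\overline{T\setminus T_{\mathbb R}}\cap r_{\mathbb R}^{-1}([0,1))$. $F$ is sun-like if $(T\setminus T_{\mathbb R})\cap r_{\mathbb R}^{-1}([0,1))$ consists of finitely many intervals with pairwise disjoint closures $X^i$, $i\in\Lambda$ (branches), each a compact interval meeting $T_{\mathbb R}$ in one endpoint $\min X^i$ (fixing the order of $X^i$). For $j\in\Lambda$, $r_j\colon T\to X^j$ is $r_j(x)=x$ for $x\in X^j$ and $r_j(x)=\min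 X^j$ otherwise. Positive covering: for nonempty compact intervals $I\subset X^i$, $J\subset X^j$, $n\ge1$ and $p\in\mathbb Z$, $I$ positively $F^n$-covers $J+p$ if there exist $x\le y$ in $I$ (order of $X^i$) with $r_j(F^n(x)-p)\le\min J$ and $\max J\le r_j(F^n(y)-p)$ (order of $X^j$). A basic partition is a finite family ${\cal P}=\{X^i_j\}$ of pairwise disjoint nonempty compact intervals $X^i_1<\dots<X^i_{N_i}$ in $X^i$, with $\ell(X^i_j)\in\Lambda$, $p(X^i_j)\in\mathbb Z$, such that $F(X^i_j)\subset(X^{\ell(X^i_j)}+p(X^i_j))\cup\mathrm{Int}(T_{\mathbb R})$, $F(\min X^i_j)=\min X^{\ell(X^i_j)}+p(X^i_j)$, and $F(X\setminus\bigcup X^i_j)\cap(X+\mathbb Z)=\emptyset$. For $A_0,\dots,A_n\in{\cal P}$, $\langle A_0\dots A_n\rangle:=F^n(\{x\in T: F^i(x)\in A_i+\mathbb Z,\ 0\le i\le n\})\cap X$. $A_0\dots A_n\sim B_0\dots B_m$ iff for some $k\le\min(n,m)$, $A_{n-i}=B_{m-i}$ ($0\le i\le k$) and $\langle A_0\dots A_{n-k}\rangle=A_{n-k}=B_{m-k}=\langle B_0\dots B_{m-k}\rangle$; then $\langle\cdot\rangle$ is well defined on classes. The covering graph ${\cal G}$: vertices are classes $A_0\dots A_n/\!\sim$ with $\langle A_0\dots A_n\rangle\ne\emptyset$; arrow $\alpha\to\beta$ iff $\alpha=A_0\dots A_n/\!\sim$, $\beta=A_0\dots A_nA_{n+1}/\!\sim$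 for some $A_i\in{\cal P}$. *)

theory Defs
  imports "HOL-Analysis.Analysis"
begin

definition finite_graph :: "'a topology \<Rightarrow> bool" where
  "finite_graph G \<longleftrightarrow> Hausdorff_space G \<and>
     (\<exists>V E. finite V \<and> finite E \<and> V \<subseteq> topspace G \<and>
        (\<forall>e\<in>E. \<exists>g. homeomorphic_map (top_of_set {0..1::real}) (subtopology G e) g \<and>
                 g 0 \<in> V \<and> g 1 \<in> V \<and> g ` {0<..<1} \<inter> V = {}) \<and>
        (\<forall>e\<in>E. \<forall>e'\<in>E. e \<noteq> e' \<longrightarrow> e \<inter> e' \<subseteq> V) \<and>
        topspace G = V \<union> \<Union>E)"

text \<open>The points of h(R) are identified with reals via h; tau is the translation x \<mapsto> x+1.\<close>

abbreviation comps_off_line :: "'a topology \<Rightarrow> (real \<Rightarrow> 'a) \<Rightarrow> 'a set set" where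
  "comps_off_line T h \<equiv> connected_components_of (subtopology T (topspace T - range h))"

definition lifted_graph :: "'a topology \<Rightarrow> (real \<Rightarrow> 'a) \<Rightarrow> ('a \<Rightarrow> 'a) \<Rightarrow> bool" where
  "lifted_graph T h tau \<longleftrightarrow>
     connected_space T \<and>
     range h \<subseteq> topspace T \<and>
     homeomorphic_map euclideanreal (subtopology T (range h)) h \<and>
     homeomorphic_map T T tau \<and>
     (\<forall>x. tau (h x) = h (x + 1)) \<and>
     (\<forall>C \<in> comps_off_line T h.
        finite_graph (subtopology T (T closure_of C)) \<and>
        (\<exists>!z. z \<in> T closure_of C \<inter> range h)) \<and>
     finite {C \<in> comps_off_line T h. T closure_of C \<inter> h ` {0..1} \<noteq> {}}"

text \<open>x + m := tau^m(x), m an integer.\<close>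
definition shift :: "'a topology \<Rightarrow> ('a \<Rightarrow> 'a) \<Rightarrow> int \<Rightarrow> 'a \<Rightarrow> 'a" where
  "shift T tau m x = (if 0 \<le> m then (tau ^^ nat m) x
                      else (inv_into (topspace T) tau ^^ nat (- m)) x)"

definition shifts_all :: "'a topology \<Rightarrow> ('a \<Rightarrow> 'a) \<Rightarrow> 'a set \<Rightarrow> 'a set" where
  "shifts_all T tau A = (\<Union>m. shift T tau m ` A)"

text \<open>The retraction r_R : T \<rightarrow> R (values are points of h(R)).\<close>
definition retrR :: "'a topology \<Rightarrow> (real \<Rightarrow> 'a) \<Rightarrow> 'a \<Rightarrow> 'a" where
  "retrR T h x = (if x \<in> range h then x
     else (THE z. z \<in> range h \<and>
                  z \<in> T closure_of (connected_component_of_set (subtopology T (topspace T - range h)) x)))"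

definition degree_one :: "'a topology \<Rightarrow> ('a \<Rightarrow> 'a) \<Rightarrow> ('a \<Rightarrow> 'a) \<Rightarrow> bool" where
  "degree_one T tau F \<longleftrightarrow> (\<forall>x\<in>topspace T. F (tau x) = tau (F x))"

definition TR :: "'a topology \<Rightarrow> (real \<Rightarrow> 'a) \<Rightarrow> ('a \<Rightarrow> 'a) \<Rightarrow> 'a set" where
  "TR T h F = T closure_of (\<Union>n. (F ^^ n) ` range h)"

definition fundR :: "'a topology \<Rightarrow> (real \<Rightarrow> 'a) \<Rightarrow> 'a set" where
  "fundR T h = {x \<in> topspace T. retrR T h x \<in> h ` {0..<1}}"

definition Xset :: "'a topology \<Rightarrow> (real \<Rightarrow> 'a) \<Rightarrow> ('a \<Rightarrow> 'a) \<Rightarrow> 'a set" where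
  "Xset T h F = T closure_of (topspace T - TR T h F) \<inter> fundR T h"

section \<open>Sun-like maps; branches parametrised by arcs gamma i : [0,1] \<rightarrow> X^i with gamma i 0 = min X^i\<close>

definition sun_like :: "'a topology \<Rightarrow> (real \<Rightarrow> 'a) \<Rightarrow> ('a \<Rightarrow> 'a)
    \<Rightarrow> 'b set \<Rightarrow> ('b \<Rightarrow> real \<Rightarrow> 'a) \<Rightarrow> bool" where
  "sun_like T h F \<Lambda> \<gamma> \<longleftrightarrow>
     finite \<Lambda> \<and>
     (\<forall>i\<in>\<Lambda>. homeomorphic_map (top_of_set {0..1}) (subtopology T (\<gamma> i ` {0..1})) (\<gamma> i) \<and>
              T closure_of (\<gamma> i ` {0<..1}) = \<gamma> i ` {0..1} \<and>
              \<gamma> i 0 \<in> TR T h F \<and> \<gamma> i ` {0<..1} \<inter> TR T h F = {}) \<and>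
     (\<forall>i\<in>\<Lambda>. \<forall>j\<in>\<Lambda>. i \<noteq> j \<longrightarrow> \<gamma> i ` {0..1} \<inter> \<gamma> j ` {0..1} = {}) \<and>
     (topspace T - TR T h F) \<inter> fundR T h = (\<Union>i\<in>\<Lambda>. \<gamma> i ` {0<..1})"

definition branch :: "('b \<Rightarrow> real \<Rightarrow> 'a) \<Rightarrow> 'b \<Rightarrow> 'a set" where
  "branch \<gamma> i = \<gamma> i ` {0..1}"

definition ordc :: "('b \<Rightarrow> real \<Rightarrow> 'a) \<Rightarrow> 'b \<Rightarrow> 'a \<Rightarrow> real" where
  "ordc \<gamma> i x = (THE t. t \<in> {0..1} \<and> \<gamma> i t = x)"

definition bmin :: "('b \<Rightarrow> real \<Rightarrow> 'a) \<Rightarrow> 'b \<Rightarrow> 'a set \<Rightarrow> 'a" where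
  "bmin \<gamma> i A = \<gamma> i (Inf (ordc \<gamma> i ` A))"

definition cinterval :: "('b \<Rightarrow> real \<Rightarrow> 'a) \<Rightarrow> 'b \<Rightarrow> 'a set \<Rightarrow> bool" where
  "cinterval \<gamma> i I \<longleftrightarrow> (\<exists>a b. 0 \<le> a \<and> a \<le> b \<and> b \<le> 1 \<and> I = \<gamma> i ` {a..b})"

definition retrb :: "('b \<Rightarrow> real \<Rightarrow> 'a) \<Rightarrow> 'b \<Rightarrow> 'a \<Rightarrow> 'a" where
  "retrb \<gamma> j x = (if x \<in> branch \<gamma> j then x else \<gamma> j 0)"

definition pos_covers :: "'a topology \<Rightarrow> ('a \<Rightarrow> 'a) \<Rightarrow> ('a \<Rightarrow> 'a) \<Rightarrow> 'b set \<Rightarrow> ('b \<Rightarrow> real \<Rightarrow> 'a)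
    \<Rightarrow> 'a set \<Rightarrow> 'a set \<Rightarrow> nat \<Rightarrow> int \<Rightarrow> bool" where
  "pos_covers T tau F \<Lambda> \<gamma> I J n p \<longleftrightarrow> n \<ge> 1 \<and>
     (\<exists>i\<in>\<Lambda>. \<exists>j\<in>\<Lambda>. cinterval \<gamma> i I \<and> cinterval \<gamma> j J \<and>
        (\<exists>x\<in>I. \<exists>y\<in>I. ordc \<gamma> i x \<le> ordc \<gamma> i y \<and>
            ordc \<gamma> j (retrb \<gamma> j (shift T tau (- p) ((F ^^ n) x))) \<le> ordc \<gamma> j (bmin \<gamma> j J) \<and>
            (\<forall>z\<in>J. ordc \<gamma> j z \<le> ordc \<gamma> j (retrb \<gamma> j (shift T tau (- p) ((F ^^ n) y))))))"

definition basic_partition :: "'a topology \<Rightarrow> (real \<Rightarrow> 'a) \<Rightarrow> ('a \<Rightarrow> 'a) \<Rightarrow> ('a \<Rightarrow> 'a)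
    \<Rightarrow> 'b set \<Rightarrow> ('b \<Rightarrow> real \<Rightarrow> 'a) \<Rightarrow> 'a set set \<Rightarrow> ('a set \<Rightarrow> 'b) \<Rightarrow> ('a set \<Rightarrow> int) \<Rightarrow> bool" where
  "basic_partition T h tau F \<Lambda> \<gamma> P lab p \<longleftrightarrow>
     finite P \<and> pairwise disjnt P \<and>
     (\<forall>A\<in>P. \<exists>i\<in>\<Lambda>. cinterval \<gamma> i A) \<and>
     (\<forall>A\<in>P. lab A \<in> \<Lambda> \<and>
        F ` A \<subseteq> shift T tau (p A) ` branch \<gamma> (lab A) \<union> T interior_of (TR T h F) \<and>
        (\<forall>i\<in>\<Lambda>. A \<subseteq> branch \<gamma> i \<longrightarrow>
            F (bmin \<gamma> i A) = shift T tau (p A) (\<gamma> (lab A) 0))) \<and>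
     F ` (Xset T h F - \<Union>P) \<inter> shifts_all T tau (Xset T h F) = {}"

definition bracket :: "'a topology \<Rightarrow> (real \<Rightarrow> 'a) \<Rightarrow> ('a \<Rightarrow> 'a) \<Rightarrow> ('a \<Rightarrow> 'a)
    \<Rightarrow> 'a set list \<Rightarrow> 'a set" where
  "bracket T h tau F As =
     (F ^^ (length As - 1)) ` {x \<in> topspace T. \<forall>i < length As. (F ^^ i) x \<in> shifts_all T tau (As ! i)}
     \<inter> Xset T h F"

definition seqs :: "'a set set \<Rightarrow> 'a set list set" where
  "seqs P = {As. As \<noteq> [] \<and> set As \<subseteq> P}"

definition seq_rel :: "'a topology \<Rightarrow> (real \<Rightarrow> 'a) \<Rightarrow> ('a \<Rightarrow> 'a) \<Rightarrow> ('a \<Rightarrow> 'a)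
    \<Rightarrow> 'a set list \<Rightarrow> 'a set list \<Rightarrow> bool" where
  "seq_rel T h tau F As Bs \<longleftrightarrow> As \<noteq> [] \<and> Bs \<noteq> [] \<and>
     (let n = length As - 1; m = length Bs - 1 in
      \<exists>k \<le> min n m. (\<forall>i \<le> k. As ! (n - i) = Bs ! (m - i)) \<and>
         bracket T h tau F (take (n - k + 1) As) = As ! (n - k) \<and>
         As ! (n - k) = Bs ! (m - k) \<and>
         bracket T h tau F (take (m - k + 1) Bs) = Bs ! (m - k))"

definition cg_class :: "'a topology \<Rightarrow> (real \<Rightarrow> 'a) \<Rightarrow> ('a \<Rightarrow> 'a) \<Rightarrow> ('a \<Rightarrow> 'a)
    \<Rightarrow> 'a set set \<Rightarrow> 'a set list \<Rightarrow> 'a set list set" where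
  "cg_class T h tau F P As =
     {Bs \<in> seqs P. equivclp (\<lambda>X Y. X \<in> seqs P \<and> Y \<in> seqs P \<and> seq_rel T h tau F X Y) As Bs}"

definition bracket_cl :: "'a topology \<Rightarrow> (real \<Rightarrow> 'a) \<Rightarrow> ('a \<Rightarrow> 'a) \<Rightarrow> ('a \<Rightarrow> 'a)
    \<Rightarrow> 'a set list set \<Rightarrow> 'a set" where
  "bracket_cl T h tau F \<alpha> = bracket T h tau F (SOME As. As \<in> \<alpha>)"

definition cg_vertex :: "'a topology \<Rightarrow> (real \<Rightarrow> 'a) \<Rightarrow> ('a \<Rightarrow> 'a) \<Rightarrow> ('a \<Rightarrow> 'a)
    \<Rightarrow> 'a set set \<Rightarrow> 'a set list set \<Rightarrow> bool" where
  "cg_vertex T h tau F P \<alpha> \<longleftrightarrow>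
     (\<exists>As \<in> seqs P. \<alpha> = cg_class T h tau F P As \<and> bracket T h tau F As \<noteq> {})"

definition cg_arrow :: "'a topology \<Rightarrow> (real \<Rightarrow> 'a) \<Rightarrow> ('a \<Rightarrow> 'a) \<Rightarrow> ('a \<Rightarrow> 'a)
    \<Rightarrow> 'a set set \<Rightarrow> 'a set list set \<Rightarrow> 'a set list set \<Rightarrow> bool" where
  "cg_arrow T h tau F P \<alpha> \<beta> \<longleftrightarrow>
     cg_vertex T h tau F P \<alpha> \<and> cg_vertex T h tau F P \<beta> \<and>
     (\<exists>As \<in> seqs P. \<exists>A' \<in> P. \<alpha> = cg_class T h tau F P As \<and> \<beta> = cg_class T h tau F P (As @ [A']))"

end

theory Submission
  imports Defs
begin

text \<open>By induction along a sequence, every nonempty bracket \<langle>A_0 ... A_n\<rangle> is an initial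
  subinterval of A_n (it contains the left endpoint of A_n), and \<langle>A_0 ... A_n B\<rangle> consists of the
  points z of B with z + p(A_n) in F\<langle>A_0 ... A_n\<rangle>. The map F sends the left endpoint of A_n to
  the root of the branch X^l + p(A_n), l = lab(A_n), and the F-image of an interval is connected and
  compact and can leave this branch only through T_R. Hence F\<langle>A_0 ... A_n\<rangle> covers exactly an
  initial segment [0, e'] of the branch, so \<langle>A_0 ... A_n B\<rangle> lies below e', and the left endpoint
  of \<langle>A_0 ... A_n\<rangle> together with a preimage of the point at e' witness the positive covering.
  Brackets are constant on equivalence classes of sequences, which transfers the statement to
  the covering graph.\<close>

lemma compact_down_closed_eq_atLeastAtMost:
  fixes Q :: "real set"
  assumes "compact Q" "0 \<in> Q" "Q \<subseteq> {0..}" "\<And>s t. t \<in> Q \<Longrightarrow> 0 \<le> s \<Longrightarrow> s \<le> t \<Longrightarrow> s \<in> Q"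
  obtains e where "e \<in> Q" "Q = {0..e}"
proof -
  obtain e where e: "e \<in> Q" "\<forall>t\<in>Q. t \<le> e"
    using compact_attains_sup[OF assms(1)] assms(2) by blast
  have "Q = {0..e}"
  proof
    show "Q \<subseteq> {0..e}"
      using e(2) assms(3) by auto
    show "{0..e} \<subseteq> Q"
      using assms(4)[OF e(1)] by auto
  qed
  with e(1) show ?thesis by (rule that)
qed

locale lifted_graph_setup =
  fixes T :: "'a topology" and h :: "real \<Rightarrow> 'a" and tau :: "'a \<Rightarrow> 'a"
  assumes lifted: "lifted_graph T h tau"
begin

abbreviation "tau_inv \<equiv> inv_into (topspace T) tau"
abbreviation "sh \<equiv> shift T tau"

lemma homeomorphic_map_tau: "homeomorphic_map T T tau"
  using lifted by (simp add: lifted_graph_def)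

lemma tau_line: "tau (h x) = h (x + 1)"
  using lifted by (simp add: lifted_graph_def)

lemma line_subset_topspace: "range h \<subseteq> topspace T"
  using lifted by (simp add: lifted_graph_def)

lemma line_in_topspace: "h x \<in> topspace T"
  using line_subset_topspace by blast

lemma line_inj: "h x = h y \<Longrightarrow> x = y"
  using homeomorphic_imp_injective_map lifted by (fastforce simp: lifted_graph_def inj_on_def)

lemma tau_in_topspace: "x \<in> topspace T \<Longrightarrow> tau x \<in> topspace T"
  using homeomorphic_map_tau homeomorphic_imp_surjective_map by blast

lemma tau_inv_in_topspace: "x \<in> topspace T \<Longrightarrow> tau_inv x \<in> topspace T"
  by (metis homeomorphic_map_tau homeomorphic_imp_surjective_map inv_into_into)

lemma tau_tau_inv: "x \<in> topspace T \<Longrightarrow> tau (tau_inv x) = x"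
  by (metis homeomorphic_map_tau homeomorphic_imp_surjective_map f_inv_into_f)

lemma tau_inv_tau: "x \<in> topspace T \<Longrightarrow> tau_inv (tau x) = x"
  by (meson homeomorphic_map_tau homeomorphic_imp_injective_map inv_into_f_f)

lemma continuous_map_tau_inv: "continuous_map T T tau_inv"
proof -
  obtain g where g: "homeomorphic_maps T T tau g"
    using homeomorphic_map_tau homeomorphic_map_maps by blast
  then have "g x = tau_inv x" if "x \<in> topspace T" for x
    using that unfolding homeomorphic_maps_def
    by (metis continuous_map_image_subset_topspace image_subset_iff tau_inv_tau)
  then show ?thesis
    using g continuous_map_eq unfolding homeomorphic_maps_def by metis
qed

lemma shift_in_topspace: "x \<in> topspace T \<Longrightarrow> sh m x \<in> topspace T"
proof -
  have "(tau ^^ n) x \<in> topspace T" "(tau_inv ^^ n) x \<in> topspace T" if "x \<in> topspace T" for n x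
    using that by (induction n) (auto simp: tau_in_topspace tau_inv_in_topspace)
  then show "x \<in> topspace T \<Longrightarrow> sh m x \<in> topspace T"
    by (simp add: shift_def)
qed

lemma shift_0 [simp]: "sh 0 x = x"
  by (simp add: shift_def)

lemma shift_succ:
  assumes "x \<in> topspace T" shows "sh (m + 1) x = tau (sh m x)"
proof (cases "0 \<le> m")
  case True
  then have "nat (m + 1) = Suc (nat m)" by simp
  with True show ?thesis by (simp add: shift_def)
next
  case False
  then have "nat (- m) = Suc (nat (- (m + 1)))" by simp
  moreover have "(tau_inv ^^ n) x \<in> topspace T" for n
    using assms by (induction n) (auto simp: tau_inv_in_topspace)
  ultimately show ?thesis
    using False assms by (cases "m = -1") (auto simp: shift_def tau_tau_inv)
qed

lemma shift_pred:
  assumes "x \<in> topspace T" shows "sh (m - 1) x = tau_inv (sh m x)"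
  using shift_succ[OF assms, of "m - 1"] by (simp add: tau_inv_tau shift_in_topspace assms)

lemma shift_shift:
  assumes "x \<in> topspace T" shows "sh m (sh k x) = sh (m + k) x"
proof (induction m rule: int_induct[where k = 0])
  case (step1 i) then show ?case
    using shift_succ[of "sh k x" i] shift_succ[of x "i + k"] assms shift_in_topspace
    by (simp add: algebra_simps)
next
  case (step2 i) then show ?case
    using shift_pred[of "sh k x" i] shift_pred[of x "i + k"] assms shift_in_topspace
    by (simp add: algebra_simps)
qed simp

lemma shift_neg_shift [simp]: "x \<in> topspace T \<Longrightarrow> sh (- m) (sh m x) = x"
  by (simp add: shift_shift)

lemma shift_shift_neg [simp]: "x \<in> topspace T \<Longrightarrow> sh m (sh (- m) x) = x"
  by (simp add: shift_shift)

lemma shift_mem_iff: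
  assumes "x \<in> topspace T" "S \<subseteq> topspace T" shows "sh m x \<in> S \<longleftrightarrow> x \<in> sh (- m) ` S"
proof
  assume "sh m x \<in> S"
  then show "x \<in> sh (- m) ` S"
    using assms(1) by (metis image_eqI shift_neg_shift)
next
  assume "x \<in> sh (- m) ` S"
  then obtain y where "y \<in> S" "x = sh (- m) y" by blast
  then show "sh m x \<in> S"
    using assms(2) by auto
qed

lemma shift_commute:
  assumes g_top: "\<And>x. x \<in> topspace T \<Longrightarrow> g x \<in> topspace T"
    and g_tau: "\<And>x. x \<in> topspace T \<Longrightarrow> g (tau x) = tau (g x)"
    and x: "x \<in> topspace T"
  shows "g (sh m x) = sh m (g x)"
proof (induction m rule: int_induct[where k = 0])
  case (step1 i) then show ?case
    using shift_succ[OF x] shift_succ[OF g_top[OF x]] g_tau[OF shift_in_topspace[OF x]] by simp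
next
  case (step2 i)
  have "tau (g (tau_inv y)) = g y" if "y \<in> topspace T" for y
    using that g_tau tau_inv_in_topspace tau_tau_inv by metis
  then have "g (tau_inv y) = tau_inv (g y)" if "y \<in> topspace T" for y
    using that by (metis g_top tau_inv_in_topspace tau_inv_tau)
  then show ?case
    using step2 shift_pred[OF x] shift_pred[OF g_top[OF x]] shift_in_topspace[OF x] by simp
qed simp

lemma continuous_map_shift: "continuous_map T T (sh m)"
proof (induction m rule: int_induct[where k = 0])
  case base
  show ?case by (rule continuous_map_eq[OF continuous_map_id]) simp
next
  case (step1 i)
  have "continuous_map T T (tau \<circ> sh i)"
    using step1 homeomorphic_map_tau homeomorphic_imp_continuous_map continuous_map_compose by blast
  then show ?case by (rule continuous_map_eq) (simp add: shift_succ)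
next
  case (step2 i)
  have "continuous_map T T (tau_inv \<circ> sh i)"
    using step2 continuous_map_tau_inv continuous_map_compose by blast
  then show ?case by (rule continuous_map_eq) (simp add: shift_pred)
qed

lemma homeomorphic_map_shift: "homeomorphic_map T T (sh m)"
proof -
  have "homeomorphic_maps T T (sh m) (sh (- m))"
    unfolding homeomorphic_maps_def using continuous_map_shift by auto
  then show ?thesis using homeomorphic_maps_map by blast
qed

lemma shift_line: "sh m (h x) = h (x + of_int m)"
proof (induction m arbitrary: x rule: int_induct[where k = 0])
  case (step1 i)
  then show ?case
    using shift_succ[OF line_in_topspace, of i x] tau_line[of "x + of_int i"] by (simp add: add.assoc)
next
  case (step2 i)
  have "tau (h (x + of_int (i - 1))) = h (x + of_int i)"
    using tau_line[of "x + of_int (i - 1)"] by simp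
  then have "h (x + of_int (i - 1)) = tau_inv (h (x + of_int i))"
    using tau_inv_tau[OF line_in_topspace] by metis
  then show ?case using shift_pred[OF line_in_topspace] step2 by simp
qed simp

lemma shift_image_eq:
  assumes "S \<subseteq> topspace T" "\<And>m x. x \<in> S \<Longrightarrow> sh m x \<in> S"
  shows "sh m ` S = S"
  using assms by (auto simp: image_iff) (metis shift_shift_neg subsetD)

lemma tau_in_line_iff:
  assumes "x \<in> topspace T" shows "tau x \<in> range h \<longleftrightarrow> x \<in> range h"
proof
  assume "tau x \<in> range h"
  then obtain r where "tau x = h r" by auto
  then have "x = tau_inv (h r)" using tau_inv_tau[OF assms] by simp
  also have "\<dots> = h (r - 1)" using tau_line[of "r - 1"] tau_inv_tau[OF line_in_topspace] by (metis diff_add_cancel)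
  finally show "x \<in> range h" by simp
qed (auto simp: tau_line)

abbreviation "off_line \<equiv> subtopology T (topspace T - range h)"
abbreviation "comp_off_line x \<equiv> connected_component_of_set off_line x"

lemma retrR_off_line:
  assumes "x \<in> topspace T" "x \<notin> range h"
  shows "\<exists>!z. z \<in> T closure_of comp_off_line x \<inter> range h"
    and "retrR T h x \<in> T closure_of comp_off_line x \<inter> range h"
proof -
  have "comp_off_line x \<in> comps_off_line T h"
    using assms by (simp add: connected_component_in_connected_components_of)
  then show uniq: "\<exists>!z. z \<in> T closure_of comp_off_line x \<inter> range h"
    using lifted by (simp add: lifted_graph_def)
  then have "\<exists>!z. z \<in> range h \<and> z \<in> T closure_of comp_off_line x"
    by blast
  from theI'[OF this] show "retrR T h x \<in> T closure_of comp_off_line x \<inter> range h"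
    using assms by (simp add: retrR_def)
qed

lemma retrR_in_line: "x \<in> topspace T \<Longrightarrow> retrR T h x \<in> range h"
  using retrR_off_line(2)[of x] by (cases "x \<in> range h") (auto simp: retrR_def)

lemma retrR_in_topspace: "x \<in> topspace T \<Longrightarrow> retrR T h x \<in> topspace T"
  using retrR_in_line line_subset_topspace by blast

lemma retrR_eq_closure_point:
  assumes "x \<in> topspace T" "x \<notin> range h" "connectedin T S" "S \<subseteq> topspace T - range h"
    "x \<in> S" "z \<in> range h" "z \<in> T closure_of S"
  shows "retrR T h x = z"
proof -
  have "connectedin off_line S"
    using assms by (simp add: connectedin_subtopology)
  then have "S \<subseteq> comp_off_line x"
    using assms(5) by (rule connected_component_of_maximal)
  then have "z \<in> T closure_of comp_off_line x"
    using assms(7) closure_of_mono by blast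
  then show ?thesis
    using retrR_off_line[OF assms(1,2)] assms(6) by blast
qed

lemma retrR_eq_on_connected:
  assumes "connectedin T S" "S \<subseteq> topspace T - range h" "x \<in> S" "y \<in> S"
  shows "retrR T h x = retrR T h y"
proof -
  have "connectedin off_line S"
    using assms by (simp add: connectedin_subtopology)
  then have "S \<subseteq> comp_off_line x"
    using assms(3) by (rule connected_component_of_maximal)
  then have "connected_component_of off_line x y"
    using assms(4) by auto
  then have "comp_off_line x = comp_off_line y"
    by (metis connected_component_of_equiv)
  then show ?thesis
    using assms by (auto simp: retrR_def)
qed

lemma retrR_tau:
  assumes x: "x \<in> topspace T" shows "retrR T h (tau x) = tau (retrR T h x)"
proof (cases "x \<in> range h")
  case True
  then show ?thesis using tau_in_line_iff[OF x] by (simp add: retrR_def)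
next
  case False
  have tx: "tau x \<in> topspace T" "tau x \<notin> range h"
    using x False tau_in_line_iff tau_in_topspace by auto
  have "homeomorphic_map off_line off_line tau"
    by (rule homeomorphic_map_subtopologies_alt[OF homeomorphic_map_tau])
      (use tau_in_line_iff in auto)
  then have comp: "comp_off_line (tau x) = tau ` comp_off_line x"
    by (rule homeomorphic_map_connected_component_of) (use x False in auto)
  have "comp_off_line x \<subseteq> topspace T"
    using connected_component_of_subset_topspace[of off_line x] by auto
  then have "T closure_of comp_off_line (tau x) = tau ` (T closure_of comp_off_line x)"
    unfolding comp by (rule homeomorphic_map_closure_of[OF homeomorphic_map_tau])
  then have "tau (retrR T h x) \<in> T closure_of comp_off_line (tau x) \<inter> range h"
    using retrR_off_line(2)[OF x False] tau_in_line_iff retrR_in_topspace[OF x] by auto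
  then show ?thesis
    using retrR_off_line[OF tx] by blast
qed

lemma retrR_shift: "x \<in> topspace T \<Longrightarrow> retrR T h (sh m x) = sh m (retrR T h x)"
  by (rule shift_commute[where g = "retrR T h"]) (auto simp: retrR_in_topspace retrR_tau)

lemma fundR_shift_eq_0:
  assumes "x \<in> fundR T h" "sh m x \<in> fundR T h" shows "m = 0"
proof -
  obtain c where c: "retrR T h x = h c" "c \<in> {0..<1}"
    using assms(1) unfolding fundR_def by auto
  have "retrR T h (sh m x) = h (c + of_int m)"
    using assms(1) c by (simp add: fundR_def retrR_shift shift_line)
  then obtain d where "h (c + of_int m) = h d" "d \<in> {0..<1}"
    using assms(2) unfolding fundR_def by auto
  then have "c + of_int m \<in> {0..<1}" using line_inj by metis
  then show ?thesis using c(2) by auto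
qed

end

locale sun_like_setup = lifted_graph_setup T h tau
  for T :: "'a topology" and h :: "real \<Rightarrow> 'a" and tau :: "'a \<Rightarrow> 'a" +
  fixes F :: "'a \<Rightarrow> 'a" and \<Lambda> :: "'b set" and \<gamma> :: "'b \<Rightarrow> real \<Rightarrow> 'a"
  assumes continuous_F: "continuous_map T T F"
    and degree_one: "degree_one T tau F"
    and sun_like: "sun_like T h F \<Lambda> \<gamma>"
begin

abbreviation "TRs \<equiv> TR T h F"
abbreviation "X \<equiv> Xset T h F"

lemma F_in_topspace: "x \<in> topspace T \<Longrightarrow> F x \<in> topspace T"
  using continuous_F continuous_map_image_subset_topspace by blast

lemma funpow_F_in_topspace: "x \<in> topspace T \<Longrightarrow> (F ^^ n) x \<in> topspace T"
  by (induction n) (auto simp: F_in_topspace)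

lemma F_shift: "x \<in> topspace T \<Longrightarrow> F (sh m x) = sh m (F x)"
  by (rule shift_commute[where g = F])
    (use F_in_topspace degree_one in \<open>auto simp: degree_one_def\<close>)

lemma funpow_F_shift: "x \<in> topspace T \<Longrightarrow> (F ^^ n) (sh m x) = sh m ((F ^^ n) x)"
  by (induction n) (simp_all add: F_shift funpow_F_in_topspace)

lemma closedin_TR: "closedin T TRs"
  by (simp add: TR_def)

lemma TR_subset_topspace: "TRs \<subseteq> topspace T"
  using closedin_TR closedin_subset by blast

lemma line_subset_TR: "range h \<subseteq> TRs"
proof -
  have "range h \<subseteq> (\<Union>n. (F ^^ n) ` range h)"
    using UN_upper[of 0 UNIV "\<lambda>n. (F ^^ n) ` range h"] by simp
  also have "\<dots> \<subseteq> TRs"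
    unfolding TR_def by (rule closure_of_subset) (use funpow_F_in_topspace line_in_topspace in auto)
  finally show ?thesis .
qed

lemma shift_image_TR: "sh m ` TRs = TRs"
proof -
  let ?U = "\<Union>n. (F ^^ n) ` range h"
  have U: "?U \<subseteq> topspace T"
    using funpow_F_in_topspace line_in_topspace by auto
  have "sh k x \<in> ?U" if "x \<in> ?U" for k x
  proof -
    obtain n r where "x = (F ^^ n) (h r)" using \<open>x \<in> ?U\<close> by blast
    then have "sh k x = (F ^^ n) (h (r + of_int k))"
      using funpow_F_shift[OF line_in_topspace, of n k r] shift_line[of k r] by simp
    then show ?thesis by blast
  qed
  then have "sh m ` ?U = ?U"
    by (rule shift_image_eq[OF U])
  then show ?thesis
    unfolding TR_def using homeomorphic_map_closure_of[OF homeomorphic_map_shift U, of m] by simp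
qed

lemma shift_in_TR: "x \<in> TRs \<Longrightarrow> sh m x \<in> TRs"
  using shift_image_TR[of m] by blast

lemma shift_in_interior_TR:
  assumes "x \<in> T interior_of TRs" shows "sh m x \<in> T interior_of TRs"
proof -
  have "sh m ` (T interior_of TRs) = T interior_of TRs"
    using homeomorphic_map_interior_of[OF homeomorphic_map_shift TR_subset_topspace, of m]
    unfolding shift_image_TR by (rule sym)
  then show ?thesis
    using assms by blast
qed

lemma X_subset_fundR: "X \<subseteq> fundR T h"
  unfolding Xset_def by (rule Int_lower2)

lemma X_subset_topspace: "X \<subseteq> topspace T"
  using X_subset_fundR unfolding fundR_def by blast

lemma X_shift_eq_0: "x \<in> X \<Longrightarrow> sh m x \<in> X \<Longrightarrow> m = 0"
  by (meson X_subset_fundR fundR_shift_eq_0 subsetD)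

lemma X_disjoint_interior_TR: "X \<inter> T interior_of TRs = {}"
proof -
  have "X \<subseteq> T closure_of (topspace T - TRs)"
    unfolding Xset_def by (rule Int_lower1)
  also have "\<dots> = topspace T - T interior_of TRs"
    by (rule closure_of_complement)
  finally show ?thesis by blast
qed

lemma homeomorphic_map_gamma:
  "i \<in> \<Lambda> \<Longrightarrow> homeomorphic_map (top_of_set {0..1}) (subtopology T (branch \<gamma> i)) (\<gamma> i)"
  using sun_like by (simp add: sun_like_def branch_def)

lemma closure_of_open_branch: "i \<in> \<Lambda> \<Longrightarrow> T closure_of (\<gamma> i ` {0<..1}) = branch \<gamma> i"
  using sun_like by (simp add: sun_like_def branch_def)

lemma gamma_notin_TR:
  assumes "i \<in> \<Lambda>" "0 < t" "t \<le> 1" shows "\<gamma> i t \<notin> TRs"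
proof -
  have "\<gamma> i ` {0<..1} \<inter> TRs = {}"
    using sun_like assms(1) by (simp add: sun_like_def)
  moreover have "\<gamma> i t \<in> \<gamma> i ` {0<..1}"
    using assms by auto
  ultimately show ?thesis by blast
qed

lemma branches_disjoint:
  assumes "i \<in> \<Lambda>" "j \<in> \<Lambda>" "x \<in> branch \<gamma> i" "x \<in> branch \<gamma> j" shows "i = j"
proof -
  have "\<forall>i\<in>\<Lambda>. \<forall>j\<in>\<Lambda>. i \<noteq> j \<longrightarrow> branch \<gamma> i \<inter> branch \<gamma> j = {}"
    using sun_like by (simp add: sun_like_def branch_def)
  then show ?thesis using assms by blast
qed

lemma continuous_map_gamma: "i \<in> \<Lambda> \<Longrightarrow> continuous_map (top_of_set {0..1}) T (\<gamma> i)"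
  using homeomorphic_imp_continuous_map[OF homeomorphic_map_gamma]
  by (rule continuous_map_into_fulltopology)

lemma branch_subset_topspace: "i \<in> \<Lambda> \<Longrightarrow> branch \<gamma> i \<subseteq> topspace T"
  using continuous_map_image_subset_topspace[OF continuous_map_gamma] by (simp add: branch_def)

lemma gamma_in_topspace: "i \<in> \<Lambda> \<Longrightarrow> t \<in> {0..1} \<Longrightarrow> \<gamma> i t \<in> topspace T"
  using branch_subset_topspace unfolding branch_def by blast

lemma closedin_branch: "i \<in> \<Lambda> \<Longrightarrow> closedin T (branch \<gamma> i)"
  by (metis closure_of_open_branch closedin_closure_of)

lemma inj_on_gamma: "i \<in> \<Lambda> \<Longrightarrow> inj_on (\<gamma> i) {0..1}"
  using homeomorphic_imp_injective_map[OF homeomorphic_map_gamma] by simp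

lemma ordc_gamma: assumes "i \<in> \<Lambda>" "t \<in> {0..1}" shows "ordc \<gamma> i (\<gamma> i t) = t"
  unfolding ordc_def using inj_on_gamma[OF assms(1)] assms(2)
  by (intro the_equality) (auto dest: inj_onD)

lemma connectedin_gamma_image:
  "i \<in> \<Lambda> \<Longrightarrow> S \<subseteq> {0..1} \<Longrightarrow> connected S \<Longrightarrow> connectedin T (\<gamma> i ` S)"
  by (metis connectedin_continuous_map_image connectedin_subtopology connectedin_iff_connected
      continuous_map_gamma)

lemma compactin_gamma_image:
  "i \<in> \<Lambda> \<Longrightarrow> S \<subseteq> {0..1} \<Longrightarrow> compact S \<Longrightarrow> compactin T (\<gamma> i ` S)"
  by (metis image_compactin compactin_subtopology compactin_euclidean_iff continuous_map_gamma)

lemma closedin_gamma_image: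
  assumes "i \<in> \<Lambda>" "0 \<le> u" "v \<le> 1" shows "closedin T (\<gamma> i ` {u..v})"
proof -
  have "closedin (top_of_set {0..1}) {u..v}"
    by (rule closed_subset) (use assms in auto)
  then have "closedin (subtopology T (branch \<gamma> i)) (\<gamma> i ` {u..v})"
    using homeomorphic_map_closedness[OF homeomorphic_map_gamma[OF assms(1)], of "{u..v}"] assms
    by auto
  then show ?thesis
    using closedin_branch[OF assms(1)] closedin_trans_full by blast
qed

lemma gamma_in_fundR:
  assumes i: "i \<in> \<Lambda>" and t: "t \<in> {0..1}" shows "\<gamma> i t \<in> fundR T h"
proof -
  have "(topspace T - TRs) \<inter> fundR T h = (\<Union>i\<in>\<Lambda>. \<gamma> i ` {0<..1})"
    using sun_like by (simp add: sun_like_def)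
  then have open_branch: "\<gamma> i ` {0<..1} \<subseteq> fundR T h"
    using i by blast
  have off_line: "\<gamma> i ` {0<..1} \<subseteq> topspace T - range h"
    using gamma_notin_TR[OF i] line_subset_TR gamma_in_topspace[OF i] by fastforce
  have retr_0: "retrR T h (\<gamma> i 0) = retrR T h (\<gamma> i 1)"
  proof (cases "\<gamma> i 0 \<in> range h")
    case True
    have one: "\<gamma> i 1 \<in> \<gamma> i ` {0<..1}" by auto
    have "connectedin T (\<gamma> i ` {0<..1})"
      by (rule connectedin_gamma_image[OF i]) auto
    moreover have "\<gamma> i 0 \<in> T closure_of (\<gamma> i ` {0<..1})"
      using closure_of_open_branch[OF i] by (auto simp: branch_def)
    ultimately have "retrR T h (\<gamma> i 1) = \<gamma> i 0"
      using retrR_eq_closure_point[OF _ _ _ off_line one True] off_line one by blast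
    then show ?thesis using True by (simp add: retrR_def)
  next
    case False
    have "\<gamma> i ` {0..1} = insert (\<gamma> i 0) (\<gamma> i ` {0<..1})"
      by (auto simp: less_eq_real_def)
    then have "\<gamma> i ` {0..1} \<subseteq> topspace T - range h"
      using False off_line gamma_in_topspace[OF i] by auto
    moreover have "connectedin T (\<gamma> i ` {0..1})"
      by (rule connectedin_gamma_image[OF i]) auto
    ultimately show ?thesis
      by (intro retrR_eq_on_connected[where S = "\<gamma> i ` {0..1}"]) auto
  qed
  show ?thesis
  proof (cases "t = 0")
    case True
    have "\<gamma> i 1 \<in> fundR T h" using open_branch by auto
    then show ?thesis
      using True retr_0 gamma_in_topspace[OF i] by (simp add: fundR_def)
  qed (use t open_branch in auto)
qed

lemma branch_subset_X: assumes i: "i \<in> \<Lambda>" shows "branch \<gamma> i \<subseteq> X"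
proof -
  have "\<gamma> i ` {0<..1} \<subseteq> topspace T - TRs"
    using gamma_notin_TR[OF i] gamma_in_topspace[OF i] by fastforce
  then have "branch \<gamma> i \<subseteq> T closure_of (topspace T - TRs)"
    using closure_of_mono closure_of_open_branch[OF i] by metis
  then show ?thesis
    using gamma_in_fundR[OF i] unfolding Xset_def branch_def by blast
qed

lemma bmin_gamma_image:
  assumes "i \<in> \<Lambda>" "0 \<le> a" "a \<le> b" "b \<le> 1" shows "bmin \<gamma> i (\<gamma> i ` {a..b}) = \<gamma> i a"
proof -
  have "ordc \<gamma> i ` \<gamma> i ` {a..b} = {a..b}"
    using ordc_gamma[OF assms(1)] assms by (force simp: image_image image_iff)
  then show ?thesis
    using assms by (simp add: bmin_def)
qed

lemma positive_covering_of_intervals: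
  assumes i: "i \<in> \<Lambda>" and j: "j \<in> \<Lambda>"
    and I: "0 \<le> a" "a \<le> s" "s \<le> e" "e \<le> 1" and J: "0 \<le> c" "c \<le> f" "f \<le> e'" "e' \<le> 1"
    and left: "F (\<gamma> i a) = sh q (\<gamma> j 0)" and right: "F (\<gamma> i s) = sh q (\<gamma> j e')"
  shows "pos_covers T tau F \<Lambda> \<gamma> (\<gamma> i ` {a..e}) (\<gamma> j ` {c..f}) 1 q"
proof -
  have "retrb \<gamma> j (sh (- q) ((F ^^ 1) (\<gamma> i a))) = \<gamma> j 0"
    using left gamma_in_topspace[OF j] by (simp add: retrb_def branch_def)
  then have x: "ordc \<gamma> j (retrb \<gamma> j (sh (- q) ((F ^^ 1) (\<gamma> i a)))) = 0"
    using ordc_gamma[OF j] by simp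
  have "retrb \<gamma> j (sh (- q) ((F ^^ 1) (\<gamma> i s))) = \<gamma> j e'"
    using right gamma_in_topspace[OF j] J by (simp add: retrb_def branch_def)
  then have y: "ordc \<gamma> j (retrb \<gamma> j (sh (- q) ((F ^^ 1) (\<gamma> i s)))) = e'"
    using ordc_gamma[OF j] J by simp
  have "ordc \<gamma> j (bmin \<gamma> j (\<gamma> j ` {c..f})) = c"
    using bmin_gamma_image[OF j] ordc_gamma[OF j] J by simp
  then have "\<exists>x\<in>\<gamma> i ` {a..e}. \<exists>y\<in>\<gamma> i ` {a..e}. ordc \<gamma> i x \<le> ordc \<gamma> i y \<and>
      ordc \<gamma> j (retrb \<gamma> j (sh (- q) ((F ^^ 1) x))) \<le> ordc \<gamma> j (bmin \<gamma> j (\<gamma> j ` {c..f})) \<and>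
      (\<forall>z\<in>\<gamma> j ` {c..f}. ordc \<gamma> j z \<le> ordc \<gamma> j (retrb \<gamma> j (sh (- q) ((F ^^ 1) y))))"
    using x y I J ordc_gamma[OF i] ordc_gamma[OF j]
    by (intro bexI[of _ "\<gamma> i a"] bexI[of _ "\<gamma> i s"]) auto
  moreover have "cinterval \<gamma> i (\<gamma> i ` {a..e})"
    unfolding cinterval_def using I by (intro exI[of _ a] exI[of _ e]) simp
  moreover have "cinterval \<gamma> j (\<gamma> j ` {c..f})"
    unfolding cinterval_def using J by (intro exI[of _ c] exI[of _ f]) simp
  ultimately show ?thesis
    unfolding pos_covers_def using i j by blast
qed

lemma connected_down_closed_on_branch:
  assumes l: "l \<in> \<Lambda>" and conn: "connectedin T D" and sub: "D \<subseteq> branch \<gamma> l \<union> TRs"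
    and zero: "\<gamma> l 0 \<in> D" and t: "t \<le> 1" "\<gamma> l t \<in> D" and s: "0 \<le> s" "s \<le> t"
  shows "\<gamma> l s \<in> D"
proof (rule ccontr)
  assume sD: "\<gamma> l s \<notin> D"
  then have "0 < s" "s < t"
    using zero t s by (auto simp: less_le)
  define E1 where "E1 = \<gamma> l ` {s..1}"
  define E2 where "E2 = \<gamma> l ` {0..s} \<union> TRs"
  have "closedin T E1"
    unfolding E1_def by (rule closedin_gamma_image[OF l]) (use \<open>0 < s\<close> in auto)
  moreover have "closedin T E2"
    unfolding E2_def
    by (intro closedin_Un closedin_gamma_image[OF l] closedin_TR) (use \<open>s < t\<close> t in auto)
  moreover have "D \<subseteq> E1 \<union> E2"
  proof
    fix x assume "x \<in> D"
    then consider "x \<in> TRs" | r where "r \<in> {0..1}" "x = \<gamma> l r"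
      using sub by (auto simp: branch_def)
    then show "x \<in> E1 \<union> E2"
    proof cases
      case (2 r)
      then show ?thesis by (cases "s \<le> r") (auto simp: E1_def E2_def)
    qed (simp add: E2_def)
  qed
  moreover have "E1 \<inter> E2 \<inter> D = {}"
  proof -
    have "r = s" if r: "r \<in> {s..1}" "\<gamma> l r \<in> E2" for r
    proof -
      have "\<gamma> l r \<notin> TRs"
        using gamma_notin_TR[OF l] r \<open>0 < s\<close> by auto
      then obtain r' where "r' \<in> {0..s}" "\<gamma> l r = \<gamma> l r'"
        using r(2) unfolding E2_def by auto
      moreover have "r \<in> {0..1}" "r' \<in> {0..1}"
        using r(1) calculation(1) \<open>0 < s\<close> \<open>s < t\<close> t by auto
      ultimately show "r = s"
        using inj_onD[OF inj_on_gamma[OF l]] r(1) by fastforce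
    qed
    then show ?thesis
      using sD unfolding E1_def by blast
  qed
  moreover have "\<gamma> l t \<in> E1" "\<gamma> l 0 \<in> E2"
    unfolding E1_def E2_def using \<open>0 < s\<close> \<open>s < t\<close> t by auto
  ultimately show False
    using conn zero t(2) unfolding connectedin_closedin by blast
qed

lemma compact_branch_preimage:
  assumes l: "l \<in> \<Lambda>" and D: "compactin T D" shows "compact {t \<in> {0..1}. \<gamma> l t \<in> D}"
proof -
  let ?Q = "{t \<in> {0..1}. \<gamma> l t \<in> D}"
  have "\<gamma> l ` ?Q = branch \<gamma> l \<inter> D"
    by (auto simp: branch_def)
  moreover have "compactin T (branch \<gamma> l \<inter> D)"
    by (rule closed_Int_compactin[OF closedin_branch[OF l] D])
  ultimately have "compactin (subtopology T (branch \<gamma> l)) (\<gamma> l ` ?Q)"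
    by (simp add: compactin_subtopology)
  moreover have "?Q \<subseteq> topspace (top_of_set {0..1})"
    by auto
  ultimately have "compactin (top_of_set {0..1}) ?Q"
    using homeomorphic_map_compactness[OF homeomorphic_map_gamma[OF l]] by blast
  then show ?thesis
    by (simp add: compactin_subtopology)
qed

end

definition initial_subinterval :: "('b \<Rightarrow> real \<Rightarrow> 'a) \<Rightarrow> 'b \<Rightarrow> 'a set \<Rightarrow> 'a set \<Rightarrow> bool" where
  "initial_subinterval \<gamma> i I A \<longleftrightarrow>
     (\<exists>a e b. 0 \<le> a \<and> a \<le> e \<and> e \<le> b \<and> b \<le> 1 \<and> A = \<gamma> i ` {a..b} \<and> I = \<gamma> i ` {a..e})"

lemma cinterval_subset_branch: "cinterval \<gamma> i A \<Longrightarrow> A \<subseteq> branch \<gamma> i"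
  by (auto simp: cinterval_def branch_def)

locale basic_partition_setup = sun_like_setup T h tau F \<Lambda> \<gamma>
  for T :: "'a topology" and h tau F and \<Lambda> :: "'b set" and \<gamma> +
  fixes P :: "'a set set" and lab :: "'a set \<Rightarrow> 'b" and p :: "'a set \<Rightarrow> int"
  assumes basic_partition: "basic_partition T h tau F \<Lambda> \<gamma> P lab p"
begin

lemma partition_cinterval: "A \<in> P \<Longrightarrow> \<exists>i\<in>\<Lambda>. cinterval \<gamma> i A"
  using basic_partition by (simp add: basic_partition_def)

lemma label_in_branches: "A \<in> P \<Longrightarrow> lab A \<in> \<Lambda>"
  using basic_partition by (simp add: basic_partition_def)

lemma F_image_partition:
  "A \<in> P \<Longrightarrow> F ` A \<subseteq> sh (p A) ` branch \<gamma> (lab A) \<union> T interior_of TRs"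
  using basic_partition by (simp add: basic_partition_def)

lemma F_bmin:
  "A \<in> P \<Longrightarrow> i \<in> \<Lambda> \<Longrightarrow> A \<subseteq> branch \<gamma> i \<Longrightarrow> F (bmin \<gamma> i A) = sh (p A) (\<gamma> (lab A) 0)"
  using basic_partition by (simp add: basic_partition_def)

lemma F_left_endpoint:
  assumes "A \<in> P" "i \<in> \<Lambda>" "A = \<gamma> i ` {a..b}" "0 \<le> a" "a \<le> b" "b \<le> 1"
  shows "F (\<gamma> i a) = sh (p A) (\<gamma> (lab A) 0)"
proof -
  have "A \<subseteq> branch \<gamma> i"
    using assms by (auto simp: branch_def)
  then show ?thesis
    using F_bmin[OF assms(1,2)] bmin_gamma_image[OF assms(2,4,5,6)] assms(3) by simp
qed

lemma partition_disjoint: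
  assumes "A \<in> P" "B \<in> P" "x \<in> A" "x \<in> B" shows "A = B"
proof (rule ccontr)
  assume "A \<noteq> B"
  moreover have "pairwise disjnt P"
    using basic_partition by (simp add: basic_partition_def)
  ultimately have "disjnt A B"
    using assms(1,2) by (rule pairwiseD[rotated -1])
  then show False
    using assms(3,4) by (simp add: disjnt_iff)
qed

lemma partition_subset_X: "A \<in> P \<Longrightarrow> A \<subseteq> X"
  by (meson partition_cinterval cinterval_subset_branch branch_subset_X subset_trans)

lemma partition_subset_topspace: "A \<in> P \<Longrightarrow> A \<subseteq> topspace T"
  using partition_subset_X X_subset_topspace by blast

lemma in_shifts_all_iff: "y \<in> shifts_all T tau A \<longleftrightarrow> (\<exists>m a. a \<in> A \<and> y = sh m a)"
  by (auto simp: shifts_all_def)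

lemma in_shifts_all: "a \<in> A \<Longrightarrow> a \<in> shifts_all T tau A"
  using in_shifts_all_iff by (metis shift_0)

lemma in_shifts_all_X:
  assumes "A \<subseteq> X" "y \<in> shifts_all T tau A" "y \<in> X" shows "y \<in> A"
proof -
  obtain m a where "a \<in> A" "y = sh m a"
    using assms(2) in_shifts_all_iff by blast
  moreover have "m = 0"
    using X_shift_eq_0 assms calculation by blast
  ultimately show ?thesis by simp
qed

text \<open>F w lies in X^(lab A) + p A or in the interior of T_R, and the latter
  meets no translate of X.\<close>

lemma F_partition_translate_in_X:
  assumes A: "A \<in> P" and w: "w \<in> A" and z: "z \<in> X" and Fw: "F w = sh m z"
  shows "m = p A" and "z \<in> branch \<gamma> (lab A)"
proof -
  have zT: "z \<in> topspace T"
    using z X_subset_topspace by blast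
  have "z \<notin> T interior_of TRs"
    using z X_disjoint_interior_TR by blast
  then have "F w \<notin> T interior_of TRs"
    using shift_in_interior_TR[of "F w" "- m"] Fw zT by (metis shift_neg_shift)
  moreover have "F w \<in> sh (p A) ` branch \<gamma> (lab A) \<union> T interior_of TRs"
    using F_image_partition[OF A] imageI[OF w] by (rule subsetD)
  ultimately have "F w \<in> sh (p A) ` branch \<gamma> (lab A)"
    by blast
  then obtain u where u: "F w = sh (p A) u" "u \<in> branch \<gamma> (lab A)"
    by (rule imageE)
  have uX: "u \<in> X" and uT: "u \<in> topspace T"
    using u(2) branch_subset_X[OF label_in_branches[OF A]] X_subset_topspace by blast+
  have z_u: "z = sh (- m + p A) u"
    using Fw u(1) shift_shift[OF uT] zT by (metis shift_neg_shift)
  then have "- m + p A = 0"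
    using X_shift_eq_0[OF uX, of "- m + p A"] z by simp
  then show "m = p A" and "z \<in> branch \<gamma> (lab A)"
    using z_u u(2) by simp_all
qed

lemma branch_label:
  assumes "j \<in> \<Lambda>" "z \<in> branch \<gamma> j" "A \<in> P" "w \<in> A" "F w = sh (p A) z"
  shows "j = lab A"
  using F_partition_translate_in_X(2)[OF assms(3,4) _ assms(5)] assms(1,2,3)
    branch_subset_X branches_disjoint label_in_branches by blast

definition itinerary_image :: "'a set list \<Rightarrow> 'a set" where
  "itinerary_image As = (F ^^ (length As - 1)) `
     {x \<in> topspace T. \<forall>i < length As. (F ^^ i) x \<in> shifts_all T tau (As ! i)}"

lemma bracket_eq_itinerary_image: "bracket T h tau F As = itinerary_image As \<inter> X"
  by (simp add: bracket_def itinerary_image_def)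

lemma itinerary_image_shift:
  assumes As: "set As \<subseteq> P" and y: "y \<in> itinerary_image As" shows "sh m y \<in> itinerary_image As"
proof -
  obtain x where x: "x \<in> topspace T" "\<forall>i < length As. (F ^^ i) x \<in> shifts_all T tau (As ! i)"
    "y = (F ^^ (length As - 1)) x"
    using y unfolding itinerary_image_def by auto
  have "(F ^^ i) (sh m x) \<in> shifts_all T tau (As ! i)" if i: "i < length As" for i
  proof -
    obtain k a where ka: "a \<in> As ! i" "(F ^^ i) x = sh k a"
      using x(2) i in_shifts_all_iff by metis
    have "a \<in> topspace T"
      using ka(1) i As partition_subset_topspace nth_mem by blast
    then have "(F ^^ i) (sh m x) = sh (m + k) a"
      using funpow_F_shift[OF x(1)] ka(2) shift_shift by simp
    then show ?thesis
      using ka(1) in_shifts_all_iff by blast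
  qed
  moreover have "sh m y = (F ^^ (length As - 1)) (sh m x)"
    using funpow_F_shift[OF x(1)] x(3) by simp
  ultimately show ?thesis
    unfolding itinerary_image_def using shift_in_topspace[OF x(1)] by blast
qed

lemma itinerary_image_last:
  assumes "As \<noteq> []" "y \<in> itinerary_image As" shows "y \<in> shifts_all T tau (last As)"
  using assms by (auto simp: itinerary_image_def last_conv_nth)

lemma itinerary_image_snoc:
  assumes "As \<noteq> []"
  shows "itinerary_image (As @ [B]) = F ` {y \<in> itinerary_image As. F y \<in> shifts_all T tau B}"
proof -
  let ?n = "length As"
  have cond: "(\<forall>i < length (As @ [B]). (F ^^ i) x \<in> shifts_all T tau ((As @ [B]) ! i)) \<longleftrightarrow>
      (\<forall>i < ?n. (F ^^ i) x \<in> shifts_all T tau (As ! i)) \<and> (F ^^ ?n) x \<in> shifts_all T tau B" for x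
    by (auto simp: nth_append less_Suc_eq)
  have "(F ^^ ?n) x = F ((F ^^ (?n - 1)) x)" for x
    using assms by (cases As) auto
  then show ?thesis
    unfolding itinerary_image_def cond by (auto simp: image_iff)
qed

lemma bracket_subset_last: assumes "As \<in> seqs P" shows "bracket T h tau F As \<subseteq> last As"
proof
  fix y assume y: "y \<in> bracket T h tau F As"
  have "As \<noteq> []" "last As \<in> P"
    using assms by (auto simp: seqs_def)
  moreover have "y \<in> itinerary_image As" "y \<in> X"
    using y by (simp_all add: bracket_eq_itinerary_image)
  ultimately show "y \<in> last As"
    using in_shifts_all_X[OF partition_subset_X] itinerary_image_last by blast
qed

lemma itinerary_image_translate_of_bracket:
  assumes As: "As \<in> seqs P" and y: "y \<in> itinerary_image As"
  obtains k w where "w \<in> bracket T h tau F As" "y = sh k w"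
proof -
  have "As \<noteq> []" "last As \<in> P" "set As \<subseteq> P"
    using As by (auto simp: seqs_def)
  then obtain k a where ka: "a \<in> last As" "y = sh k a"
    using itinerary_image_last y in_shifts_all_iff by blast
  have "a \<in> X" "a \<in> topspace T"
    using ka(1) \<open>last As \<in> P\<close> partition_subset_X partition_subset_topspace by blast+
  moreover have "a = sh (- k) y"
    using ka calculation by simp
  then have "a \<in> itinerary_image As"
    using itinerary_image_shift[OF \<open>set As \<subseteq> P\<close> y] by simp
  ultimately show ?thesis
    using that ka(2) bracket_eq_itinerary_image by blast
qed

definition bracket_step :: "'a set \<Rightarrow> 'a set \<Rightarrow> 'a set \<Rightarrow> 'a set" where
  "bracket_step I A B = {z \<in> B. sh (p A) z \<in> F ` I}"

lemma bracket_snoc: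
  assumes As: "As \<in> seqs P" and B: "B \<in> P"
  shows "bracket T h tau F (As @ [B]) = bracket_step (bracket T h tau F As) (last As) B"
proof (intro equalityI subsetI)
  have ne: "As \<noteq> []" and L: "last As \<in> P"
    using As by (auto simp: seqs_def)
  fix z
  assume z: "z \<in> bracket T h tau F (As @ [B])"
  then have zX: "z \<in> X"
    by (simp add: bracket_eq_itinerary_image)
  obtain y where y: "y \<in> itinerary_image As" "F y \<in> shifts_all T tau B" "z = F y"
    using z by (auto simp: bracket_eq_itinerary_image itinerary_image_snoc[OF ne])
  have zB: "z \<in> B"
    using in_shifts_all_X[OF partition_subset_X[OF B]] y zX by blast
  obtain k w where w: "w \<in> bracket T h tau F As" "y = sh k w"
    using itinerary_image_translate_of_bracket[OF As y(1)] by blast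
  have wL: "w \<in> last As"
    using w(1) bracket_subset_last[OF As] by blast
  then have "w \<in> topspace T"
    using L partition_subset_topspace by blast
  then have "F w = sh (- k) z"
    using y(3) w(2) F_shift F_in_topspace by simp
  then have "F w = sh (p (last As)) z"
    using F_partition_translate_in_X(1)[OF L wL zX] by simp
  then have "sh (p (last As)) z \<in> F ` bracket T h tau F As"
    using w(1) by (metis image_eqI)
  then show "z \<in> bracket_step (bracket T h tau F As) (last As) B"
    using zB by (simp add: bracket_step_def)
next
  have ne: "As \<noteq> []" and sP: "set As \<subseteq> P"
    using As by (auto simp: seqs_def)
  fix z
  assume "z \<in> bracket_step (bracket T h tau F As) (last As) B"
  then obtain w where zw: "z \<in> B" "w \<in> bracket T h tau F As" "F w = sh (p (last As)) z"
    unfolding bracket_step_def by (metis (mono_tags, lifting) imageE mem_Collect_eq)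
  have zT: "z \<in> topspace T" and zX: "z \<in> X"
    using zw(1) B partition_subset_topspace partition_subset_X by blast+
  have wI: "w \<in> itinerary_image As" and wT: "w \<in> topspace T"
    using zw(2) X_subset_topspace by (auto simp: bracket_eq_itinerary_image)
  let ?y = "sh (- p (last As)) w"
  have "?y \<in> itinerary_image As"
    using itinerary_image_shift[OF sP wI] .
  moreover have "F ?y = z"
    using F_shift[OF wT] zw(3) zT by simp
  moreover have "z \<in> shifts_all T tau B"
    using zw(1) by (rule in_shifts_all)
  ultimately have "z \<in> itinerary_image (As @ [B])"
    unfolding itinerary_image_snoc[OF ne] by blast
  then show "z \<in> bracket T h tau F (As @ [B])"
    using zX by (simp add: bracket_eq_itinerary_image)
qed

lemma bracket_single: assumes "A \<in> P" shows "bracket T h tau F [A] = A"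
proof
  show "bracket T h tau F [A] \<subseteq> A"
    using bracket_subset_last[of "[A]"] assms by (simp add: seqs_def)
  show "A \<subseteq> bracket T h tau F [A]"
  proof
    fix a assume a: "a \<in> A"
    then have "a \<in> shifts_all T tau A"
      by (rule in_shifts_all)
    then have "a \<in> itinerary_image [A]"
      unfolding itinerary_image_def using a assms partition_subset_topspace by auto
    then show "a \<in> bracket T h tau F [A]"
      using a assms partition_subset_X by (auto simp: bracket_eq_itinerary_image)
  qed
qed

lemma bracket_prefix_nonempty:
  assumes "As \<in> seqs P" "B \<in> P" "bracket T h tau F (As @ [B]) \<noteq> {}"
  shows "bracket T h tau F As \<noteq> {}"
  using assms(3) bracket_snoc[OF assms(1,2)] by (auto simp: bracket_step_def)

lemma partition_eq_last:
  assumes "A \<in> P" "As \<in> seqs P" "bracket T h tau F As \<noteq> {}" "bracket T h tau F As \<subseteq> A"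
  shows "A = last As"
proof -
  obtain x where "x \<in> A" "x \<in> last As"
    using assms(3,4) bracket_subset_last[OF assms(2)] by blast
  moreover have "last As \<in> P"
    using assms(2) last_in_set by (auto simp: seqs_def)
  ultimately show ?thesis
    using partition_disjoint[OF assms(1)] by blast
qed

fun bracket_steps :: "'a set \<Rightarrow> 'a set \<Rightarrow> 'a set list \<Rightarrow> 'a set" where
  "bracket_steps I L [] = I"
| "bracket_steps I L (B # Bs) = bracket_steps (bracket_step I L B) B Bs"

lemma bracket_append:
  assumes "As \<in> seqs P" "set Bs \<subseteq> P"
  shows "bracket T h tau F (As @ Bs) = bracket_steps (bracket T h tau F As) (last As) Bs"
  using assms
proof (induction Bs arbitrary: As)
  case (Cons B Bs)
  have "As @ [B] \<in> seqs P"
    using Cons.prems by (auto simp: seqs_def)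
  then have "bracket T h tau F ((As @ [B]) @ Bs) = bracket_steps (bracket T h tau F (As @ [B])) B Bs"
    using Cons.IH Cons.prems(2) by (simp del: append_assoc)
  then show ?case
    using bracket_snoc Cons.prems by simp
qed simp

text \<open>Once the bracket of a prefix is the partition element itself, the bracket of the whole
  sequence depends only on the remaining suffix.\<close>

lemma seq_rel_bracket:
  assumes As: "As \<in> seqs P" and Bs: "Bs \<in> seqs P" and rel: "seq_rel T h tau F As Bs"
  shows "bracket T h tau F As = bracket T h tau F Bs"
proof -
  define n where "n = length As - 1"
  define m where "m = length Bs - 1"
  obtain k where k: "k \<le> min n m" "\<forall>i \<le> k. As ! (n - i) = Bs ! (m - i)"
    "bracket T h tau F (take (n - k + 1) As) = As ! (n - k)"
    "As ! (n - k) = Bs ! (m - k)"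
    "bracket T h tau F (take (m - k + 1) Bs) = Bs ! (m - k)"
    using rel unfolding seq_rel_def n_def m_def Let_def by blast
  have neA: "As \<noteq> []" and neB: "Bs \<noteq> []" and sA: "set As \<subseteq> P" and sB: "set Bs \<subseteq> P"
    using As Bs by (auto simp: seqs_def)
  have lA: "length As = n + 1" and lB: "length Bs = m + 1"
    using neA neB n_def m_def by auto
  have pre: "take (n - k + 1) As \<in> seqs P" "take (m - k + 1) Bs \<in> seqs P"
    using neA neB sA sB set_take_subset by (fastforce simp: seqs_def)+
  have suf: "set (drop (n - k + 1) As) \<subseteq> P" "set (drop (m - k + 1) Bs) \<subseteq> P"
    using sA sB set_drop_subset by fastforce+
  have last_pre: "last (take (n - k + 1) As) = As ! (n - k)" "last (take (m - k + 1) Bs) = Bs ! (m - k)"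
    using lA lB k(1) by (simp_all add: take_Suc_conv_app_nth)
  have same_suffix: "drop (n - k + 1) As = drop (m - k + 1) Bs"
  proof (rule nth_equalityI)
    show "length (drop (n - k + 1) As) = length (drop (m - k + 1) Bs)"
      using lA lB k(1) by simp
  next
    fix i assume "i < length (drop (n - k + 1) As)"
    then have i: "i < k" using lA k(1) by simp
    have "As ! (n - (k - 1 - i)) = Bs ! (m - (k - 1 - i))"
      using k(2) by simp
    moreover have "n - (k - 1 - i) = n - k + 1 + i" "m - (k - 1 - i) = m - k + 1 + i"
      using i k(1) by auto
    ultimately show "drop (n - k + 1) As ! i = drop (m - k + 1) Bs ! i"
      using lA lB k(1) i by simp
  qed
  have "bracket T h tau F As = bracket_steps (As ! (n - k)) (As ! (n - k)) (drop (n - k + 1) As)"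
    using bracket_append[OF pre(1) suf(1)] k(3) last_pre(1) by simp
  also have "\<dots> = bracket_steps (Bs ! (m - k)) (Bs ! (m - k)) (drop (m - k + 1) Bs)"
    using same_suffix k(4) by simp
  also have "\<dots> = bracket T h tau F Bs"
    using bracket_append[OF pre(2) suf(2)] k(5) last_pre(2) by simp
  finally show ?thesis .
qed

lemma bracket_cg_class:
  assumes "Bs \<in> cg_class T h tau F P As" shows "bracket T h tau F Bs = bracket T h tau F As"
proof -
  have "equivclp (\<lambda>X Y. X \<in> seqs P \<and> Y \<in> seqs P \<and> seq_rel T h tau F X Y) As Bs"
    using assms by (simp add: cg_class_def)
  then have "bracket T h tau F As = bracket T h tau F Bs"
    by (induction rule: equivclp_induct) (auto dest: seq_rel_bracket)
  then show ?thesis by simp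
qed

lemma bracket_cl_cg_class:
  assumes "As \<in> seqs P"
  shows "bracket_cl T h tau F (cg_class T h tau F P As) = bracket T h tau F As"
proof -
  have "As \<in> cg_class T h tau F P As"
    using assms by (simp add: cg_class_def)
  then have "(SOME Bs. Bs \<in> cg_class T h tau F P As) \<in> cg_class T h tau F P As"
    by (rule someI)
  then show ?thesis
    unfolding bracket_cl_def by (rule bracket_cg_class)
qed

lemma cg_arrow_brackets:
  assumes "cg_arrow T h tau F P \<alpha> \<beta>"
  obtains As B where "As \<in> seqs P" "B \<in> P"
    "bracket_cl T h tau F \<alpha> = bracket T h tau F As"
    "bracket_cl T h tau F \<beta> = bracket T h tau F (As @ [B])"
    "bracket T h tau F (As @ [B]) \<noteq> {}"
proof -
  obtain As B where As: "As \<in> seqs P" and B: "B \<in> P"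
    and \<alpha>: "\<alpha> = cg_class T h tau F P As" and \<beta>: "\<beta> = cg_class T h tau F P (As @ [B])"
    using assms unfolding cg_arrow_def by blast
  have AsB: "As @ [B] \<in> seqs P"
    using As B by (auto simp: seqs_def)
  obtain Cs where "Cs \<in> cg_class T h tau F P (As @ [B])" "bracket T h tau F Cs \<noteq> {}"
    using assms \<beta> unfolding cg_arrow_def cg_vertex_def cg_class_def by fastforce
  then have "bracket T h tau F (As @ [B]) \<noteq> {}"
    using bracket_cg_class by metis
  with As B show ?thesis
    using that bracket_cl_cg_class[OF As] bracket_cl_cg_class[OF AsB] \<alpha> \<beta> by blast
qed

lemma shift_F_image_partition:
  assumes A: "A \<in> P" shows "sh (- p A) ` F ` A \<subseteq> branch \<gamma> (lab A) \<union> TRs"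
proof
  fix d assume "d \<in> sh (- p A) ` F ` A"
  then obtain c where c: "c \<in> F ` A" "d = sh (- p A) c"
    by blast
  have "c \<in> sh (p A) ` branch \<gamma> (lab A) \<union> T interior_of TRs"
    using F_image_partition[OF A] c(1) by (rule subsetD)
  then show "d \<in> branch \<gamma> (lab A) \<union> TRs"
  proof (rule UnE)
    assume "c \<in> sh (p A) ` branch \<gamma> (lab A)"
    then obtain u where u: "c = sh (p A) u" "u \<in> branch \<gamma> (lab A)"
      by (rule imageE)
    have "u \<in> topspace T"
      using branch_subset_topspace[OF label_in_branches[OF A]] u(2) by (rule subsetD)
    then have "d = u"
      using shift_neg_shift[of u "p A"] c(2) u(1) by (simp only:)
    then show ?thesis
      using u(2) by blast
  next
    assume "c \<in> T interior_of TRs"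
    then have "c \<in> TRs"
      using interior_of_subset[of T TRs] by blast
    then show ?thesis
      using c(2) shift_in_TR by simp
  qed
qed

definition covered_params :: "'a set \<Rightarrow> 'a set \<Rightarrow> real set" where
  "covered_params A S = {t \<in> {0..1}. sh (p A) (\<gamma> (lab A) t) \<in> F ` S}"

lemma covered_params_eq:
  assumes "A \<in> P" "S \<subseteq> topspace T"
  shows "covered_params A S = {t \<in> {0..1}. \<gamma> (lab A) t \<in> sh (- p A) ` F ` S}"
proof -
  have "F ` S \<subseteq> topspace T"
    using assms(2) F_in_topspace by blast
  then have "sh (p A) (\<gamma> (lab A) t) \<in> F ` S \<longleftrightarrow> \<gamma> (lab A) t \<in> sh (- p A) ` F ` S"
    if "t \<in> {0..1}" for t
    using shift_mem_iff[OF gamma_in_topspace[OF label_in_branches[OF assms(1)] that]] by blast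
  then show ?thesis
    unfolding covered_params_def by blast
qed

text \<open>F maps S to a connected compact set which contains the root of the branch
  X^(lab A) + p A and can leave that branch only through T_R; so the branch parameters it
  covers form an interval [0, e'].\<close>

lemma covered_params_interval:
  assumes A: "A \<in> P" and S: "S \<subseteq> A" "connectedin T S" "compactin T S"
    and root: "sh (p A) (\<gamma> (lab A) 0) \<in> F ` S"
  obtains e' where "e' \<in> {0..1}" "covered_params A S = {0..e'}"
proof -
  let ?l = "lab A" and ?D = "sh (- p A) ` F ` S"
  have l: "?l \<in> \<Lambda>"
    using label_in_branches[OF A] .
  have cont: "continuous_map T T (sh (- p A) \<circ> F)"
    using continuous_map_compose[OF continuous_F continuous_map_shift] .
  have D_image: "?D = (sh (- p A) \<circ> F) ` S"
    by (simp add: image_comp)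
  have conn: "connectedin T ?D"
    unfolding D_image using connectedin_continuous_map_image[OF cont S(2)] .
  have cpt: "compactin T ?D"
    unfolding D_image using image_compactin[OF S(3) cont] .
  have "?D \<subseteq> sh (- p A) ` F ` A"
    using S(1) by (intro image_mono)
  then have sub: "?D \<subseteq> branch \<gamma> ?l \<union> TRs"
    using shift_F_image_partition[OF A] by (rule order_trans)
  have S_T: "S \<subseteq> topspace T"
    using S(1) partition_subset_topspace[OF A] by (rule order_trans)
  then have "F ` S \<subseteq> topspace T"
    using F_in_topspace by blast
  then have root_D: "\<gamma> ?l 0 \<in> ?D"
    using shift_mem_iff[OF gamma_in_topspace[OF l, of 0]] root by simp
  have Q_eq: "covered_params A S = {t \<in> {0..1}. \<gamma> ?l t \<in> ?D}"
    by (rule covered_params_eq[OF A S_T])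
  have "compact (covered_params A S)"
    unfolding Q_eq by (rule compact_branch_preimage[OF l cpt])
  moreover have "0 \<in> covered_params A S"
    unfolding Q_eq using root_D by simp
  moreover have "covered_params A S \<subseteq> {0..}"
    by (auto simp: covered_params_def)
  moreover have "s \<in> covered_params A S" if "t \<in> covered_params A S" "0 \<le> s" "s \<le> t" for s t
    using that connected_down_closed_on_branch[OF l conn sub root_D] unfolding Q_eq by auto
  ultimately obtain e' where "e' \<in> covered_params A S" "covered_params A S = {0..e'}"
    by (rule compact_down_closed_eq_atLeastAtMost)
  moreover have "e' \<in> {0..1}"
    using calculation(1) by (simp add: covered_params_def)
  ultimately show ?thesis
    using that by blast
qed

lemma covered_params_initial_subinterval:
  assumes A: "A \<in> P" and i: "i \<in> \<Lambda>" and sub: "initial_subinterval \<gamma> i I A"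
  obtains e' where "e' \<in> {0..1}" "covered_params A I = {0..e'}"
proof -
  obtain a e b where ab: "0 \<le> a" "a \<le> e" "e \<le> b" "b \<le> 1" and
    A_eq: "A = \<gamma> i ` {a..b}" and I_eq: "I = \<gamma> i ` {a..e}"
    using sub unfolding initial_subinterval_def by blast
  have "I \<subseteq> A"
    using A_eq I_eq ab by auto
  moreover have "connectedin T I" "compactin T I"
    unfolding I_eq using connectedin_gamma_image[OF i] compactin_gamma_image[OF i] ab by auto
  moreover have "\<gamma> i a \<in> I"
    using I_eq ab by simp
  then have "sh (p A) (\<gamma> (lab A) 0) \<in> F ` I"
    using F_left_endpoint[OF A i A_eq] ab by (metis image_eqI order_trans)
  ultimately show ?thesis
    using that by (rule covered_params_interval[OF A])
qed

lemma bracket_step_gamma_image: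
  assumes A: "A \<in> P" and I: "I \<subseteq> A" and j: "j \<in> \<Lambda>"
    and B: "B = \<gamma> j ` {c..d}" "0 \<le> c" "d \<le> 1"
  shows "bracket_step I A B = (if j = lab A then \<gamma> j ` ({c..d} \<inter> covered_params A I) else {})"
proof (cases "j = lab A")
  case True
  have step_iff: "\<gamma> j t \<in> bracket_step I A B \<longleftrightarrow> t \<in> covered_params A I" if t: "t \<in> {c..d}" for t
  proof -
    have "\<gamma> j t \<in> B" "t \<in> {0..1}"
      using t B by auto
    then have "\<gamma> j t \<in> bracket_step I A B \<longleftrightarrow> sh (p A) (\<gamma> (lab A) t) \<in> F ` I"
      using True by (simp add: bracket_step_def)
    also have "\<dots> \<longleftrightarrow> t \<in> covered_params A I"
      using \<open>t \<in> {0..1}\<close> by (simp add: covered_params_def)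
    finally show ?thesis .
  qed
  have "bracket_step I A B = \<gamma> j ` ({c..d} \<inter> covered_params A I)"
  proof (intro equalityI subsetI)
    fix z assume z: "z \<in> bracket_step I A B"
    then obtain t where "t \<in> {c..d}" "z = \<gamma> j t"
      using B unfolding bracket_step_def by blast
    then show "z \<in> \<gamma> j ` ({c..d} \<inter> covered_params A I)"
      using z step_iff by blast
  next
    fix z assume "z \<in> \<gamma> j ` ({c..d} \<inter> covered_params A I)"
    then show "z \<in> bracket_step I A B"
      using step_iff by blast
  qed
  then show ?thesis
    using True by simp
next
  case False
  have "z \<notin> bracket_step I A B" for z
  proof
    assume "z \<in> bracket_step I A B"
    then obtain w where "z \<in> B" "w \<in> I" "F w = sh (p A) z"
      unfolding bracket_step_def by (metis (mono_tags, lifting) imageE mem_Collect_eq)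
    then have "z \<in> B" "w \<in> A" "F w = sh (p A) z"
      using I by auto
    moreover have "B \<subseteq> branch \<gamma> j"
      using B by (auto simp: branch_def)
    ultimately show False
      using branch_label[OF j _ A] False by blast
  qed
  then show ?thesis
    using False by auto
qed

lemma bracket_step_initial_subinterval:
  assumes A: "A \<in> P" and i: "i \<in> \<Lambda>" and sub: "initial_subinterval \<gamma> i I A"
    and B: "B \<in> P" and nonempty: "bracket_step I A B \<noteq> {}"
  shows "initial_subinterval \<gamma> (lab A) (bracket_step I A B) B"
proof -
  obtain e' where e': "e' \<in> {0..1}" "covered_params A I = {0..e'}"
    using covered_params_initial_subinterval[OF A i sub] .
  obtain j c d where j: "j \<in> \<Lambda>" and cd: "0 \<le> c" "c \<le> d" "d \<le> 1" and B_eq: "B = \<gamma> j ` {c..d}"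
    using partition_cinterval[OF B] unfolding cinterval_def by blast
  have "I \<subseteq> A"
    using sub unfolding initial_subinterval_def by auto
  then have step: "bracket_step I A B = (if j = lab A then \<gamma> j ` ({c..d} \<inter> {0..e'}) else {})"
    using bracket_step_gamma_image[OF A _ j B_eq cd(1,3)] e'(2) by simp
  have "j = lab A"
  proof (rule ccontr)
    assume "j \<noteq> lab A"
    then show False
      using nonempty step by simp
  qed
  then have "bracket_step I A B = \<gamma> j ` ({c..d} \<inter> {0..e'})"
    using step by simp
  also have "{c..d} \<inter> {0..e'} = {c..min d e'}"
    using cd by auto
  finally have step': "bracket_step I A B = \<gamma> j ` {c..min d e'}" .
  then have "c \<le> min d e'"
    using nonempty by (cases "c \<le> min d e'") auto
  then show ?thesis
    unfolding initial_subinterval_def using step' B_eq cd \<open>j = lab A\<close>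
    by (intro exI[of _ c] exI[of _ "min d e'"] exI[of _ d]) simp
qed

lemma bracket_initial_subinterval:
  assumes "As \<in> seqs P" "bracket T h tau F As \<noteq> {}"
  shows "\<exists>i\<in>\<Lambda>. initial_subinterval \<gamma> i (bracket T h tau F As) (last As)"
  using assms
proof (induction As rule: rev_induct)
  case (snoc B As)
  have B: "B \<in> P"
    using snoc.prems by (simp add: seqs_def)
  show ?case
  proof (cases "As = []")
    case True
    obtain j c d where "j \<in> \<Lambda>" "0 \<le> c" "c \<le> d" "d \<le> 1" "B = \<gamma> j ` {c..d}"
      using partition_cinterval[OF B] unfolding cinterval_def by blast
    then show ?thesis
      using True bracket_single[OF B] unfolding initial_subinterval_def
      by (intro bexI[of _ j] exI[of _ c] exI[of _ d] exI[of _ d]) auto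
  next
    case False
    then have As: "As \<in> seqs P" "last As \<in> P"
      using snoc.prems last_in_set by (auto simp: seqs_def)
    have step: "bracket T h tau F (As @ [B]) = bracket_step (bracket T h tau F As) (last As) B"
      by (rule bracket_snoc[OF As(1) B])
    have "bracket T h tau F As \<noteq> {}"
      using bracket_prefix_nonempty[OF As(1) B snoc.prems(2)] .
    then obtain i where "i \<in> \<Lambda>" "initial_subinterval \<gamma> i (bracket T h tau F As) (last As)"
      using snoc.IH[OF As(1)] by blast
    then show ?thesis
      using bracket_step_initial_subinterval[OF As(2) _ _ B] snoc.prems(2) step
        label_in_branches[OF As(2)] by auto
  qed
qed (simp add: seqs_def)

lemma pos_covers_bracket_snoc:
  assumes As: "As \<in> seqs P" and B: "B \<in> P" and nonempty: "bracket T h tau F (As @ [B]) \<noteq> {}"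
  shows "pos_covers T tau F \<Lambda> \<gamma> (bracket T h tau F As) (bracket T h tau F (As @ [B])) 1 (p (last As))"
proof -
  let ?A = "last As" and ?I = "bracket T h tau F As" and ?J = "bracket T h tau F (As @ [B])"
  let ?l = "lab ?A"
  have A: "?A \<in> P"
    using As last_in_set by (auto simp: seqs_def)
  have J_step: "?J = bracket_step ?I ?A B"
    by (rule bracket_snoc[OF As B])
  have "?I \<noteq> {}"
    using bracket_prefix_nonempty[OF As B nonempty] .
  then obtain i where i: "i \<in> \<Lambda>" and I_sub: "initial_subinterval \<gamma> i ?I ?A"
    using bracket_initial_subinterval[OF As] by blast
  then obtain a e b where ae: "0 \<le> a" "a \<le> e" "e \<le> b" "b \<le> 1"
    and A_eq: "?A = \<gamma> i ` {a..b}" and I_eq: "?I = \<gamma> i ` {a..e}"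
    unfolding initial_subinterval_def by blast
  obtain e' where e': "e' \<in> {0..1}" "covered_params ?A ?I = {0..e'}"
    using covered_params_initial_subinterval[OF A i I_sub] .
  have "initial_subinterval \<gamma> ?l ?J B"
    using bracket_step_initial_subinterval[OF A i I_sub B] J_step nonempty by simp
  then obtain c f d where cf: "0 \<le> c" "c \<le> f" "f \<le> d" "d \<le> 1" and J_eq: "?J = \<gamma> ?l ` {c..f}"
    unfolding initial_subinterval_def by blast
  have "\<gamma> ?l f \<in> bracket_step ?I ?A B"
    using J_step J_eq cf by auto
  then have "f \<in> covered_params ?A ?I"
    using cf by (simp add: bracket_step_def covered_params_def)
  then have "f \<le> e'"
    using e'(2) by simp
  have "e' \<in> covered_params ?A ?I"
    using e' by simp
  then have "sh (p ?A) (\<gamma> ?l e') \<in> (\<lambda>t. F (\<gamma> i t)) ` {a..e}"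
    unfolding covered_params_def I_eq by (simp add: image_image)
  then obtain s where s: "sh (p ?A) (\<gamma> ?l e') = F (\<gamma> i s)" "s \<in> {a..e}"
    by (rule imageE)
  have "F (\<gamma> i a) = sh (p ?A) (\<gamma> ?l 0)"
    using F_left_endpoint[OF A i A_eq] ae by simp
  then show ?thesis
    unfolding I_eq J_eq
    using positive_covering_of_intervals[OF i label_in_branches[OF A] _ _ _ _ cf(1,2) \<open>f \<le> e'\<close>
        _ _ s(1)[symmetric]] ae s(2) e'
    by auto
qed

end

theorem mainTheorem11:
  fixes T :: "'a topology" and h :: "real \<Rightarrow> 'a" and tau F :: "'a \<Rightarrow> 'a"
    and \<Lambda> :: "'b set" and \<gamma> :: "'b \<Rightarrow> real \<Rightarrow> 'a"
    and P :: "'a set set" and lab :: "'a set \<Rightarrow> 'b" and p :: "'a set \<Rightarrow> int"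
    and \<alpha> \<beta> :: "'a set list set" and A :: "'a set"
  assumes "lifted_graph T h tau"
    and "continuous_map T T F"
    and "degree_one T tau F"
    and "sun_like T h F \<Lambda> \<gamma>"
    and "basic_partition T h tau F \<Lambda> \<gamma> P lab p"
    and "cg_arrow T h tau F P \<alpha> \<beta>"
    and "A \<in> P"
    and "bracket_cl T h tau F \<alpha> \<subseteq> A"
  shows "pos_covers T tau F \<Lambda> \<gamma> (bracket_cl T h tau F \<alpha>) (bracket_cl T h tau F \<beta>) 1 (p A)"
proof -
  interpret basic_partition_setup T h tau F \<Lambda> \<gamma> P lab p
    using assms(1-5) by unfold_locales
  obtain As B where As: "As \<in> seqs P" and B: "B \<in> P"
    and \<alpha>: "bracket_cl T h tau F \<alpha> = bracket T h tau F As"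
    and \<beta>: "bracket_cl T h tau F \<beta> = bracket T h tau F (As @ [B])"
    and nonempty: "bracket T h tau F (As @ [B]) \<noteq> {}"
    using cg_arrow_brackets[OF assms(6)] .
  have "A = last As"
    using partition_eq_last[OF assms(7) As bracket_prefix_nonempty[OF As B nonempty]] assms(8) \<alpha>
    by simp
  then show ?thesis
    using pos_covers_bracket_snoc[OF As B nonempty] \<alpha> \<beta> by simp
qed

end
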